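(* Let $K$ be a ramified quadratic extension of $\mathbb{Q}_2$ with ring of integers $\mathcal{O}$ and uniformizer $\pi$ as specified in the context, and let $d=2m$ with $m$ odd, $m\ge3$. Let $r\ge 0$ be an integer. (1) If $a_1=\pi^r u_1$, $a_2=\pi^r u_2$ with $u_1,u_2$ units whose $\pi$-coefficients differ, then for each $e\in\{0,1\}$ there exist units $b_1,b_2\in\mathcal{O}$ with $a_1b_1^d+a_2b_2^d=\pi^{r+1}w$, where $w$ is a unit with $\pi$-coefficient $e$. (2) If $a_1=\pi^r u_1$, $a_2=\pi^r u_2$ with $u_1,u_2$ units having the same $\pi$-coefficient, then there exist units $b_1,b_2\in\mathcal{O}$ with $\mathrm{ord}_\pi(a_1b_1^d+a_2b_2^d)=r+2$. (3) Under the hypothesis of (2), there exist units $b_1,b_2\in\mathcal{O}$ with $\mathrm{ord}_\pi(a_1b_1^d+a_2b_2^d)\ge r+3$ (where $\mathrm{ord}_\pi(0)=\infty$). (4) Suppose $K\in\{\mathbb{Q}_2(\sqrt{-1}),\mathbb{Q}_2(\sqrt{-5})\}$. If $a_1,a_2,a_3$ are of the form $a_i=\pi^r u_i$ with units $u_i$ all having the same $\pi$-coefficient, then there are indices $i\neq j$ in $\{1,2,3\}$ and units $b_i,b_j\in\mathcal{O}$ with $\mathrm{ord}_\pi(a_ib_i^d+a_jb_j^d)\ge r+4$. (5) Suppose $K\in\{\mathbb{Q}_2(\sqrt{2}),\mathbb{Q}_2(\sqrt{10}),\mathbb{Q}_2(\sqrt{-2}),\mathbb{Q}_2(\sqrt{-10})\}$.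 If $a_1,a_2,a_3$ are of the form $a_i=\pi^r u_i$ with units $u_i$ all having the same $\pi$-coefficient $c$, then there are indices $i\neq j$ in $\{1,2,3\}$ and units $b_i,b_j\in\mathcal{O}$ with $a_ib_i^d+a_jb_j^d=\pi^{r+2}w$, where $w$ is a unit whose $\pi$-coefficient is $c$.
   Context: $K$ is one of the six ramified quadratic extensions of $\mathbb{Q}_2$, with uniformizer $\pi$ chosen as follows: $\pi=\sqrt{2}$ for $\mathbb{Q}_2(\sqrt2)$, $\pi=\sqrt{-2}$ for $\mathbb{Q}_2(\sqrt{-2})$, $\pi=\sqrt{10}$ for $\mathbb{Q}_2(\sqrt{10})$, $\pi=\sqrt{-10}$ for $\mathbb{Q}_2(\sqrt{-10})$, $\pi=1+\sqrt{-1}$ for $\mathbb{Q}_2(\sqrt{-1})$, $\pi=1+\sqrt{-5}$ for $\mathbb{Q}_2(\sqrt{-5})$. Every unit $u\in\mathcal{O}$ has a unique expansion $u=c_0+c_1\pi+c_2\pi^2+\cdots$ with all $c_k\in\{0,1\}$ and $c_0=1$; $c_1$ is called the $\pi$-coefficient of $u$. *)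

theory Defs
  imports "HOL-Algebra.Ring" "HOL-Algebra.Divisibility" "HOL-Library.Extended_Nat"
begin

datatype qfield = Q2_sqrt2 | Q2_sqrtm2 | Q2_sqrt10 | Q2_sqrtm10 | Q2_sqrtm1 | Q2_sqrtm5

text \<open>The uniformizer pi satisfies pi^2 = tr K * pi - nm K (its minimal polynomial
  x^2 - tr K x + nm K is Eisenstein), and the ring of integers is Z_2[pi] = Z_2 + Z_2 pi.
  pi = sqrt 2: x^2-2; sqrt(-2): x^2+2; sqrt 10: x^2-10; sqrt(-10): x^2+10;
  1+sqrt(-1): x^2-2x+2; 1+sqrt(-5): x^2-2x+6.\<close>
fun tr :: "qfield \<Rightarrow> int" where
  "tr Q2_sqrt2 = 0" | "tr Q2_sqrtm2 = 0" | "tr Q2_sqrt10 = 0" | "tr Q2_sqrtm10 = 0"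
| "tr Q2_sqrtm1 = 2" | "tr Q2_sqrtm5 = 2"

fun nm :: "qfield \<Rightarrow> int" where
  "nm Q2_sqrt2 = -2" | "nm Q2_sqrtm2 = 2" | "nm Q2_sqrt10 = -10" | "nm Q2_sqrtm10 = 10"
| "nm Q2_sqrtm1 = 2" | "nm Q2_sqrtm5 = 6"

text \<open>An element alpha + beta*pi of O, with alpha, beta 2-adic integers, is represented by the
  compatible sequence of its truncations: s n = (alpha mod 2^n, beta mod 2^n).
  This is the inverse limit of the rings O / 2^n O = (Z/2^n)[pi].\<close>
type_synonym oelt = "nat \<Rightarrow> int \<times> int"

definition ocarrier :: "oelt set" where
  "ocarrier = {s. \<forall>n. fst (s n) \<in> {0..<2^n} \<and> snd (s n) \<in> {0..<2^n}
       \<and> fst (s (Suc n)) mod 2^n = fst (s n) \<and> snd (s (Suc n)) mod 2^n = snd (s n)}"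

definition oadd :: "oelt \<Rightarrow> oelt \<Rightarrow> oelt" where
  "oadd s t = (\<lambda>n. ((fst (s n) + fst (t n)) mod 2^n, (snd (s n) + snd (t n)) mod 2^n))"

definition omul :: "qfield \<Rightarrow> oelt \<Rightarrow> oelt \<Rightarrow> oelt" where
  "omul K s t = (\<lambda>n. let a = fst (s n); b = snd (s n); c = fst (t n); d = snd (t n) in
      ((a * c - nm K * b * d) mod 2^n, (a * d + b * c + tr K * b * d) mod 2^n))"

definition ORing :: "qfield \<Rightarrow> oelt ring" where
  "ORing K = \<lparr>carrier = ocarrier, monoid.mult = omul K, monoid.one = (\<lambda>n. (1 mod 2^n, 0)),
              ring.zero = (\<lambda>n. (0, 0)), ring.add = oadd\<rparr>"

definition opi :: oelt where
  "opi = (\<lambda>n. (0, 1 mod 2^n))"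

text \<open>The pi-coefficient c_1 of a unit u = 1 + c_1 pi + c_2 pi^2 + ...: the unique
  c in {0,1} with u - 1 - c pi divisible by pi^2.\<close>
definition pcoeff :: "qfield \<Rightarrow> oelt \<Rightarrow> nat" where
  "pcoeff K u = (THE c. c \<in> {0,1} \<and> (\<exists>v\<in>carrier (ORing K).
      u = \<one>\<^bsub>ORing K\<^esub> \<oplus>\<^bsub>ORing K\<^esub> (if c = 0 then \<zero>\<^bsub>ORing K\<^esub> else opi)
          \<oplus>\<^bsub>ORing K\<^esub> (opi [^]\<^bsub>ORing K\<^esub> (2::nat)) \<otimes>\<^bsub>ORing K\<^esub> v))"

definition pord :: "qfield \<Rightarrow> oelt \<Rightarrow> enat" where
  "pord K x = Sup {enat k | k. (opi [^]\<^bsub>ORing K\<^esub> k) divides\<^bsub>ORing K\<^esub> x}"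

end

theory Submission
  imports Defs
begin

text \<open>Since 2 is pi^2 times a unit, the residue x 2 of an element modulo 4 determines it modulo
  pi^4; it decides whether pi or pi^2 divides x and what the quotient is modulo pi. For a unit b
  and odd m, b^(2m) is congruent to b^2 modulo 4, so the residue of u1 b1^d + u2 b2^d modulo 4
  depends only on the residues of u1, u2, b1, b2. After factoring pi^r out of the sum, each
  assertion becomes a finite computation over the residues of units modulo 4, with b1 and b2
  taken from 1 and 1 + pi.\<close>

section \<open>Arithmetic of O modulo powers of 2\<close>

definition pair_mod :: "nat \<Rightarrow> int \<times> int \<Rightarrow> int \<times> int" where
  "pair_mod n x = (fst x mod 2^n, snd x mod 2^n)"

text \<open>A pair (a, b) stands for a + b pi in Z[pi], where pi^2 = tr K pi - nm K.\<close>
definition pair_mult :: "qfield \<Rightarrow> int \<times> int \<Rightarrow> int \<times> int \<Rightarrow> int \<times> int" where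
  "pair_mult K x y = (fst x * fst y - nm K * snd x * snd y,
                      fst x * snd y + snd x * fst y + tr K * snd x * snd y)"

definition pair_add :: "int \<times> int \<Rightarrow> int \<times> int \<Rightarrow> int \<times> int" where
  "pair_add x y = (fst x + fst y, snd x + snd y)"

lemma pair_mult_commute: "pair_mult K x y = pair_mult K y x"
  by (simp add: pair_mult_def algebra_simps)

lemma pair_mult_assoc: "pair_mult K (pair_mult K x y) z = pair_mult K x (pair_mult K y z)"
  by (simp add: pair_mult_def algebra_simps)

lemma pair_mult_one: "pair_mult K (1, 0) x = x"
  by (simp add: pair_mult_def)

lemma pair_mod_mult_left: "pair_mod n (pair_mult K (pair_mod n x) y) = pair_mod n (pair_mult K x y)"
proof -
  obtain a b c d where xy: "x = (a, b)" "y = (c, d)" by fastforce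
  let ?M = "(2::int) ^ n"
  have "(a mod ?M * c) mod ?M = (a * c) mod ?M" "(a mod ?M * d) mod ?M = (a * d) mod ?M"
    "(b mod ?M * c) mod ?M = (b * c) mod ?M"
    "(nm K * (b mod ?M) * d) mod ?M = (nm K * b * d) mod ?M"
    "(tr K * (b mod ?M) * d) mod ?M = (tr K * b * d) mod ?M"
    by (simp_all add: mod_mult_left_eq) (metis mod_mult_left_eq mod_mult_right_eq)+
  then show ?thesis
    unfolding xy pair_mod_def pair_mult_def
    by (simp del: mod_mult_left_eq mod_mult_right_eq, intro conjI mod_diff_cong mod_add_cong, auto)
qed

lemma pair_mod_mult_right: "pair_mod n (pair_mult K x (pair_mod n y)) = pair_mod n (pair_mult K x y)"
  by (metis pair_mult_commute pair_mod_mult_left)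

lemma pair_mod_add_left: "pair_mod n (pair_add (pair_mod n x) y) = pair_mod n (pair_add x y)"
  by (simp add: pair_mod_def pair_add_def mod_simps)

lemma pair_mod_add_right: "pair_mod n (pair_add x (pair_mod n y)) = pair_mod n (pair_add x y)"
  by (simp add: pair_mod_def pair_add_def mod_simps)

lemma pair_mod_neg: "pair_mod n (- fst (pair_mod n x), - snd (pair_mod n x)) = pair_mod n (- fst x, - snd x)"
  by (simp add: pair_mod_def mod_simps)

lemma pair_mod_pair_mod: "k \<le> n \<Longrightarrow> pair_mod k (pair_mod n x) = pair_mod k x"
  by (simp add: pair_mod_def mod_mod_cancel le_imp_power_dvd)

lemmas pair_mod_simps = pair_mod_mult_left pair_mod_mult_right pair_mod_add_left pair_mod_add_right

lemma omul_apply: "omul K s t n = pair_mod n (pair_mult K (s n) (t n))"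
  by (simp add: omul_def pair_mod_def pair_mult_def Let_def)

lemma oadd_apply: "oadd s t n = pair_mod n (pair_add (s n) (t n))"
  by (simp add: oadd_def pair_mod_def pair_add_def)

lemma mod_power2_eq_self_iff: "(x::int) mod 2^n = x \<longleftrightarrow> x \<in> {0..<2^n}"
  by (metis atLeastLessThan_iff mod_pos_pos_trivial pos_mod_bound pos_mod_sign
      zero_less_numeral zero_less_power)

lemma ocarrier_iff:
  "s \<in> ocarrier \<longleftrightarrow> (\<forall>n. pair_mod n (s n) = s n) \<and> (\<forall>n. pair_mod n (s (Suc n)) = s n)"
  unfolding ocarrier_def pair_mod_def
  by (auto simp: prod_eq_iff mod_power2_eq_self_iff simp del: atLeastLessThan_iff)

lemma ocarrier_pair_mod: "s \<in> ocarrier \<Longrightarrow> pair_mod n (s n) = s n"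
  by (simp add: ocarrier_iff)

lemma ocarrier_pair_mod_Suc: "s \<in> ocarrier \<Longrightarrow> pair_mod n (s (Suc n)) = s n"
  by (simp add: ocarrier_iff)

lemma ocarrier_pair_mod_le:
  assumes "s \<in> ocarrier" "k \<le> n"
  shows "pair_mod k (s n) = s k"
  using assms(2)
proof (induction n)
  case (Suc n)
  show ?case
  proof (cases "k = Suc n")
    case False
    then have "pair_mod k (s (Suc n)) = pair_mod k (pair_mod n (s (Suc n)))"
      using Suc.prems by (simp add: pair_mod_pair_mod)
    also have "\<dots> = s k" using ocarrier_pair_mod_Suc[OF assms(1)] Suc False by simp
    finally show ?thesis .
  qed (use ocarrier_pair_mod[OF assms(1)] in simp)
qed (use ocarrier_pair_mod[OF assms(1)] in simp)

lemma ocarrier_level1: "s \<in> ocarrier \<Longrightarrow> s 1 = pair_mod 1 (s 2)"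
  using ocarrier_pair_mod_le[of s 1 2] by simp

definition oconst :: "int \<Rightarrow> int \<Rightarrow> oelt" where
  "oconst a b = (\<lambda>n. pair_mod n (a, b))"

lemma oconst_closed: "oconst a b \<in> ocarrier"
  unfolding ocarrier_iff oconst_def by (simp add: pair_mod_pair_mod)

lemma oconst_apply: "oconst a b n = pair_mod n (a, b)"
  by (simp add: oconst_def)

lemma oadd_oconst: "oadd (oconst a b) (oconst c d) = oconst (a + c) (b + d)"
  by (rule ext) (simp add: oadd_apply oconst_def pair_mod_simps, simp add: pair_add_def)

lemma opi_oconst: "opi = oconst 0 1"
  by (auto simp: opi_def oconst_def pair_mod_def)

lemma opi_closed: "opi \<in> ocarrier"
  by (simp add: opi_oconst oconst_closed)

definition oneg :: "oelt \<Rightarrow> oelt" where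
  "oneg s = (\<lambda>n. pair_mod n (- fst (s n), - snd (s n)))"

lemma omul_closed: "s \<in> ocarrier \<Longrightarrow> t \<in> ocarrier \<Longrightarrow> omul K s t \<in> ocarrier"
  unfolding ocarrier_iff omul_apply
  by (metis order.refl pair_mod_pair_mod pair_mod_mult_left pair_mod_mult_right le_SucI)

lemma oadd_closed: "s \<in> ocarrier \<Longrightarrow> t \<in> ocarrier \<Longrightarrow> oadd s t \<in> ocarrier"
  unfolding ocarrier_iff oadd_apply
  by (metis order.refl pair_mod_pair_mod pair_mod_add_left pair_mod_add_right le_SucI)

lemma oneg_closed: "s \<in> ocarrier \<Longrightarrow> oneg s \<in> ocarrier"
  unfolding ocarrier_iff oneg_def
  by (metis order.refl pair_mod_pair_mod pair_mod_neg le_SucI)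

lemma omul_commute: "omul K x y = omul K y x"
  by (rule ext) (simp add: omul_apply pair_mult_commute)

lemma omul_assoc: "omul K (omul K x y) z = omul K x (omul K y z)"
  by (rule ext) (simp add: omul_apply pair_mod_simps pair_mult_assoc)

lemma oadd_commute: "oadd x y = oadd y x"
  by (rule ext) (simp add: oadd_apply pair_add_def algebra_simps)

lemma oadd_assoc: "oadd (oadd x y) z = oadd x (oadd y z)"
  by (rule ext) (simp add: oadd_apply pair_mod_simps, simp add: pair_add_def algebra_simps)

lemma omul_oadd_distrib: "omul K x (oadd y z) = oadd (omul K x y) (omul K x z)"
  by (rule ext) (simp add: omul_apply oadd_apply pair_mod_simps,
      simp add: pair_mult_def pair_add_def algebra_simps)

lemma omul_one: "x \<in> ocarrier \<Longrightarrow> omul K (oconst 1 0) x = x"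
  by (rule ext) (simp add: omul_apply oconst_def pair_mod_mult_left pair_mult_one ocarrier_pair_mod)

lemma oadd_zero: "x \<in> ocarrier \<Longrightarrow> oadd (oconst 0 0) x = x"
  by (rule ext) (simp add: oadd_apply oconst_def pair_mod_add_left,
      simp add: pair_add_def ocarrier_pair_mod)

lemma oadd_oneg: "oadd (oneg x) x = oconst 0 0"
  by (rule ext) (simp add: oadd_apply oneg_def oconst_def pair_mod_add_left,
      simp add: pair_add_def pair_mod_def)

lemma ORing_simps:
  "carrier (ORing K) = ocarrier" "monoid.mult (ORing K) = omul K" "ring.add (ORing K) = oadd"
  "monoid.one (ORing K) = oconst 1 0" "ring.zero (ORing K) = oconst 0 0"
  by (auto simp: ORing_def oconst_def pair_mod_def)

lemma cring_ORing: "cring (ORing K)"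
proof (rule cringI)
  show "abelian_group (ORing K)"
  proof (rule abelian_groupI, simp_all add: ORing_simps oadd_closed oconst_closed oadd_assoc oadd_zero)
    show "oadd x y = oadd y x" for x y
      by (rule oadd_commute)
    show "\<exists>y\<in>ocarrier. oadd y x = oconst 0 0" if "x \<in> ocarrier" for x
      using oneg_closed[OF that] oadd_oneg by blast
  qed
  show "comm_monoid (ORing K)"
  proof (rule comm_monoidI, simp_all add: ORing_simps omul_closed oconst_closed omul_assoc omul_one)
    show "omul K x y = omul K y x" for x y
      by (rule omul_commute)
  qed
  show "(x \<oplus>\<^bsub>ORing K\<^esub> y) \<otimes>\<^bsub>ORing K\<^esub> z = x \<otimes>\<^bsub>ORing K\<^esub> z \<oplus>\<^bsub>ORing K\<^esub> y \<otimes>\<^bsub>ORing K\<^esub> z"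
    for x y z
    by (simp add: ORing_simps omul_commute[of K _ z] omul_oadd_distrib)
qed

section \<open>Units\<close>

lemma even_tr: "even (tr K)"
  by (cases K) auto

lemma even_nm: "even (nm K)"
  by (cases K) auto

lemma nm_eq_twice_odd: "nm K = 2 * (nm K div 2) \<and> odd (nm K div 2)"
  by (cases K) simp_all

text \<open>Inverting a + b pi modulo 2^n: its norm a^2 + tr a b + nm b^2 is odd,
  and (a + b pi)(a + tr b - b pi) is that norm.\<close>
lemma pair_inverse_exists:
  assumes "n = 0 \<or> odd (fst x)"
  shows "\<exists>y. pair_mod n y = y \<and> pair_mod n (pair_mult K x y) = pair_mod n (1, 0)"
proof (cases "n = 0")
  case True
  then show ?thesis by (intro exI[of _ "(0, 0)"]) (simp add: pair_mod_def)
next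
  case False
  obtain a b where x: "x = (a, b)" by fastforce
  define N where "N = a * a + tr K * a * b + nm K * b * b"
  have "odd N"
    using False assms even_tr[of K] even_nm[of K] unfolding N_def x by auto
  then have "coprime N (2 ^ n)" by simp
  then obtain u v where uv: "u * N + v * 2 ^ n = 1"
    using bezout_int[of N "2 ^ n"] by (metis gcd_eq_1_imp_coprime coprime_imp_gcd_eq_1)
  define z where "z = ((a + tr K * b) * u, - b * u)"
  have "pair_mult K x z = (1 + (- v) * 2 ^ n, 0)"
    using uv unfolding z_def x N_def pair_mult_def by (simp add: algebra_simps)
  then have "pair_mod n (pair_mult K x z) = pair_mod n (1, 0)"
    by (simp only: pair_mod_def mod_mult_self1 fst_conv snd_conv)
  then show ?thesis
    by (intro exI[of _ "pair_mod n z"]) (simp add: pair_mod_pair_mod pair_mod_mult_right)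
qed

lemma pair_inverse_unique:
  assumes "pair_mod n y = y" "pair_mod n y' = y'"
    and "pair_mod n (pair_mult K x y) = pair_mod n (1, 0)"
    and "pair_mod n (pair_mult K x y') = pair_mod n (1, 0)"
  shows "y = y'"
proof -
  have "y = pair_mod n (pair_mult K (pair_mod n (1, 0)) y)"
    using assms(1) by (simp add: pair_mod_mult_left pair_mult_one)
  also have "\<dots> = pair_mod n (pair_mult K (pair_mult K x y') y)"
    using assms(4) by (metis pair_mod_mult_left)
  also have "\<dots> = pair_mod n (pair_mult K y' (pair_mult K x y))"
    by (metis pair_mult_assoc pair_mult_commute)
  also have "\<dots> = pair_mod n (pair_mult K y' (1, 0))"
    using assms(3) by (metis pair_mod_mult_right)
  also have "\<dots> = y'"
    using assms(2) by (simp add: pair_mult_def)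
  finally show ?thesis .
qed

definition pair_inverse :: "qfield \<Rightarrow> nat \<Rightarrow> int \<times> int \<Rightarrow> int \<times> int" where
  "pair_inverse K n x = (SOME y. pair_mod n y = y \<and> pair_mod n (pair_mult K x y) = pair_mod n (1, 0))"

lemma pair_inverse_is_inverse:
  assumes "n = 0 \<or> odd (fst x)"
  shows "pair_mod n (pair_inverse K n x) = pair_inverse K n x"
    and "pair_mod n (pair_mult K x (pair_inverse K n x)) = pair_mod n (1, 0)"
  using someI_ex[OF pair_inverse_exists[OF assms]] unfolding pair_inverse_def by blast+

lemma ocarrier_odd_level:
  assumes "x \<in> ocarrier" "odd (fst (x 1))"
  shows "n = 0 \<or> odd (fst (x n))"
proof (cases "n = 0")
  case False
  then have "pair_mod 1 (x n) = x 1" using ocarrier_pair_mod_le[OF assms(1), of 1 n] by simp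
  then have "fst (x n) mod 2 = fst (x 1)" by (simp add: pair_mod_def prod_eq_iff)
  then show ?thesis using assms(2) by (metis even_mod_2_iff)
qed simp

definition oinv :: "qfield \<Rightarrow> oelt \<Rightarrow> oelt" where
  "oinv K x = (\<lambda>n. pair_inverse K n (x n))"

lemma oinv_is_inverse:
  assumes "x \<in> ocarrier" "odd (fst (x 1))"
  shows "oinv K x \<in> ocarrier" "omul K x (oinv K x) = oconst 1 0"
proof -
  note inv = pair_inverse_is_inverse[OF ocarrier_odd_level[OF assms]]
  have "pair_mod n (pair_inverse K (Suc n) (x (Suc n))) = pair_inverse K n (x n)" for n
  proof (rule pair_inverse_unique[where x = "x n"])
    have "pair_mod n (pair_mult K (x n) (pair_mod n (pair_inverse K (Suc n) (x (Suc n)))))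
        = pair_mod n (pair_mod (Suc n) (pair_mult K (x (Suc n)) (pair_inverse K (Suc n) (x (Suc n)))))"
      using ocarrier_pair_mod_Suc[OF assms(1), of n]
      by (metis le_SucI order.refl pair_mod_mult_left pair_mod_mult_right pair_mod_pair_mod)
    also have "\<dots> = pair_mod n (1, 0)"
      using inv(2)[of "Suc n"] by (simp add: pair_mod_pair_mod)
    finally show "pair_mod n (pair_mult K (x n) (pair_mod n (pair_inverse K (Suc n) (x (Suc n)))))
        = pair_mod n (1, 0)" .
  qed (simp_all add: pair_mod_pair_mod inv)
  then show "oinv K x \<in> ocarrier"
    unfolding ocarrier_iff oinv_def by (simp add: inv)
  show "omul K x (oinv K x) = oconst 1 0"
    by (rule ext) (simp add: omul_apply oinv_def oconst_def inv)
qed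

lemma Units_ORing_iff: "x \<in> Units (ORing K) \<longleftrightarrow> x \<in> ocarrier \<and> odd (fst (x 1))"
proof
  assume "x \<in> Units (ORing K)"
  then obtain y where xy: "x \<in> ocarrier" "omul K y x = oconst 1 0"
    unfolding Units_def ORing_simps by auto
  then have "pair_mod 1 (pair_mult K (y 1) (x 1)) = pair_mod 1 (1, 0)"
    by (metis omul_apply oconst_apply)
  then have "(fst (y 1) * fst (x 1) - nm K * snd (y 1) * snd (x 1)) mod 2 = 1"
    by (simp add: pair_mod_def pair_mult_def prod_eq_iff)
  then show "x \<in> ocarrier \<and> odd (fst (x 1))"
    using xy(1) even_nm[of K] by (metis dvd_mult dvd_mult2 dvd_diff even_mod_2_iff odd_one)
next
  assume x: "x \<in> ocarrier \<and> odd (fst (x 1))"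
  then show "x \<in> Units (ORing K)"
    using oinv_is_inverse[of x K] unfolding Units_def ORing_simps by (auto simp: omul_commute)
qed

section \<open>Divisibility by pi and the valuation\<close>

lemma omul_oconst: "omul K (oconst a b) (oconst c d) = oconst (fst (pair_mult K (a, b) (c, d))) (snd (pair_mult K (a, b) (c, d)))"
  by (rule ext) (simp add: omul_apply oconst_def pair_mod_simps)

lemma even_fst_Suc:
  assumes "x \<in> ocarrier" "fst (x 1) = 0"
  shows "even (fst (x (Suc n)))"
proof -
  have "pair_mod 1 (x (Suc n)) = x 1" using ocarrier_pair_mod_le[OF assms(1), of 1 "Suc n"] by simp
  then have "fst (x (Suc n)) mod 2 = 0" using assms(2) by (simp add: pair_mod_def prod_eq_iff)
  then show ?thesis by presburger
qed

lemma ocarrier_half: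
  assumes "x \<in> ocarrier" "fst (x 1) = 0"
  shows "(\<lambda>n. (fst (x (Suc n)) div 2, 0)) \<in> ocarrier"
  unfolding ocarrier_iff
proof (intro conjI allI)
  fix n
  have "fst (x (Suc n)) \<in> {0..<2 ^ Suc n}"
    using ocarrier_pair_mod[OF assms(1), of "Suc n"] by (metis fst_conv mod_power2_eq_self_iff pair_mod_def)
  then show "pair_mod n (fst (x (Suc n)) div 2, 0) = (fst (x (Suc n)) div 2, 0)"
    by (simp add: pair_mod_def mod_power2_eq_self_iff) linarith
  obtain h where h: "fst (x (Suc (Suc n))) = 2 * h" using even_fst_Suc[OF assms] by blast
  have "fst (x (Suc (Suc n))) mod 2 ^ Suc n = fst (x (Suc n))"
    using ocarrier_pair_mod_Suc[OF assms(1), of "Suc n"] by (simp add: pair_mod_def prod_eq_iff)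
  then have "fst (x (Suc n)) = 2 * (h mod 2 ^ n)" by (simp add: h mod_mult_mult1)
  then show "pair_mod n (fst (x (Suc (Suc n))) div 2, 0) = (fst (x (Suc n)) div 2, 0)"
    by (simp add: h pair_mod_def)
qed

text \<open>Write x = A + B pi with A, B in Z_2. If A is even then A = 2 H, and 2 = pi^2 eta^-1
  for the unit eta = pi^2 / 2 (pi is Eisenstein), so x = pi (pi eta^-1 H + B).\<close>
lemma opi_dvd:
  assumes x: "x \<in> ocarrier" and x1: "fst (x 1) = 0"
  obtains y where "y \<in> ocarrier" "x = omul K opi y"
proof -
  define A where "A = (\<lambda>n. (fst (x n), 0::int))"
  define B where "B = (\<lambda>n. (snd (x n), 0::int))"
  define H where "H = (\<lambda>n. (fst (x (Suc n)) div 2, 0::int))"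
  define eta where "eta = oconst (- nm K div 2) (tr K div 2)"
  have A: "A \<in> ocarrier" and B: "B \<in> ocarrier"
    using x unfolding ocarrier_iff A_def B_def by (simp_all add: pair_mod_def prod_eq_iff)
  have H: "H \<in> ocarrier" unfolding H_def using ocarrier_half[OF x x1] .
  have eta: "eta \<in> ocarrier" "odd (fst (eta 1))"
    unfolding eta_def by (simp add: oconst_closed) (cases K, simp_all add: oconst_def pair_mod_def)
  note eta_inv = oinv_is_inverse[OF eta, of K]
  have x_eq: "x = oadd A (omul K B opi)"
    by (rule ext) (simp add: oadd_apply omul_apply A_def B_def opi_oconst oconst_apply
        pair_mod_simps, simp add: pair_mult_def pair_add_def ocarrier_pair_mod[OF x])
  have A_eq: "A = omul K (oconst 2 0) H"
  proof (rule ext)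
    fix n
    have "2 * (fst (x (Suc n)) div 2) = fst (x (Suc n))" using even_fst_Suc[OF x x1] by simp
    moreover have "fst (x (Suc n)) mod 2 ^ n = fst (x n)"
      using ocarrier_pair_mod_Suc[OF x, of n] by (simp add: pair_mod_def prod_eq_iff)
    ultimately show "A n = omul K (oconst 2 0) H n"
      by (simp add: omul_apply A_def H_def oconst_apply pair_mod_mult_left,
          simp add: pair_mult_def pair_mod_def)
  qed
  have "omul K (oconst 2 0) eta = omul K opi opi"
    unfolding eta_def opi_oconst omul_oconst by (cases K) (simp_all add: pair_mult_def)
  then have two: "oconst 2 0 = omul K (omul K opi opi) (oinv K eta)"
    using eta_inv(2) omul_one[OF oconst_closed, of K 2 0]
    by (metis omul_assoc omul_commute)
  have "x = omul K opi (oadd (omul K (omul K opi (oinv K eta)) H) B)"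
    unfolding x_eq A_eq two omul_oadd_distrib
    by (simp add: omul_assoc omul_commute[of K B])
  moreover have "oadd (omul K (omul K opi (oinv K eta)) H) B \<in> ocarrier"
    by (intro oadd_closed omul_closed opi_closed eta_inv H B)
  ultimately show ?thesis using that by blast
qed

lemma ocarrier_level2:
  assumes "y \<in> ocarrier"
  obtains c d where "y 2 = (c, d)" "c \<in> {0, 1, 2, 3}" "d \<in> {0, 1, 2, 3}"
proof -
  have "fst (y 2) \<in> {0..<4}" "snd (y 2) \<in> {0..<4}"
    using ocarrier_pair_mod[OF assms, of 2]
    by (metis fst_conv snd_conv mod_power2_eq_self_iff pair_mod_def power2_eq_square
        numeral_times_numeral semiring_norm(12) semiring_norm(13))+
  moreover have "c \<in> {0..<4} \<Longrightarrow> c \<in> {0, 1, 2, 3}" for c :: int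
    by auto
  ultimately show ?thesis using that by (metis prod.collapse)
qed

interpretation ORing: cring "ORing K" for K
  by (rule cring_ORing)

lemma ORing_mult_apply: "(x \<otimes>\<^bsub>ORing K\<^esub> y) n = pair_mod n (pair_mult K (x n) (y n))"
  by (simp add: ORing_simps omul_apply)

lemma ORing_add_apply: "(x \<oplus>\<^bsub>ORing K\<^esub> y) n = pair_mod n (pair_add (x n) (y n))"
  by (simp add: ORing_simps oadd_apply)

lemma opi_carrier: "opi \<in> carrier (ORing K)"
  by (simp add: ORing_simps opi_closed)

text \<open>If x = pi y (resp. x = pi^2 y), the residue of y mod pi is determined by that of x mod 4.\<close>
definition div_pi_residue :: "int \<times> int \<Rightarrow> int \<times> int" where
  "div_pi_residue X = (snd X mod 2, fst X div 2)"

definition div_pi2_residue :: "qfield \<Rightarrow> int \<times> int \<Rightarrow> int \<times> int" where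
  "div_pi2_residue K X = (fst X div 2, (snd X div 2 - (tr K div 2) * (fst X div 2)) mod 2)"

lemma div_pi_residue_correct:
  assumes "y \<in> carrier (ORing K)"
  shows "y 1 = div_pi_residue ((opi \<otimes>\<^bsub>ORing K\<^esub> y) 2)"
proof -
  obtain c d where cd: "y 2 = (c, d)" "c \<in> {0, 1, 2, 3}" "d \<in> {0, 1, 2, 3}"
    using ocarrier_level2 assms by (auto simp: ORing_simps)
  have "(opi \<otimes>\<^bsub>ORing K\<^esub> y) 2 = pair_mod 2 (pair_mult K (0, 1) (c, d))"
    by (simp add: ORing_mult_apply opi_oconst oconst_apply cd(1) pair_mod_mult_left)
  then show ?thesis
    using cd ocarrier_level1[of y] assms
    by (cases K) (auto simp: ORing_simps div_pi_residue_def pair_mod_def pair_mult_def)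
qed

lemma div_pi2_residue_correct:
  assumes "y \<in> carrier (ORing K)"
  shows "y 1 = div_pi2_residue K ((opi \<otimes>\<^bsub>ORing K\<^esub> opi \<otimes>\<^bsub>ORing K\<^esub> y) 2)"
proof -
  obtain c d where cd: "y 2 = (c, d)" "c \<in> {0, 1, 2, 3}" "d \<in> {0, 1, 2, 3}"
    using ocarrier_level2 assms by (auto simp: ORing_simps)
  have "pair_mod 2 (0, 1) = (0, 1)" by (simp add: pair_mod_def)
  then have "(opi \<otimes>\<^bsub>ORing K\<^esub> opi \<otimes>\<^bsub>ORing K\<^esub> y) 2
      = pair_mod 2 (pair_mult K (pair_mult K (0, 1) (0, 1)) (c, d))"
    by (simp add: ORing_mult_apply opi_oconst oconst_apply cd(1) pair_mod_mult_left)
  then show ?thesis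
    using cd ocarrier_level1[of y] assms
    by (cases K) (auto simp: ORing_simps div_pi2_residue_def pair_mod_def pair_mult_def)
qed

lemma opi_dvd_residue:
  assumes "x \<in> carrier (ORing K)" "fst (x 1) = 0"
  obtains y where "y \<in> carrier (ORing K)" "x = opi \<otimes>\<^bsub>ORing K\<^esub> y" "y 1 = div_pi_residue (x 2)"
  using opi_dvd[of x K] div_pi_residue_correct[of _ K] assms by (metis ORing_simps(1,2))

lemma opi2_dvd_residue:
  assumes x: "x \<in> carrier (ORing K)" and x1: "x 1 = (0, 0)"
  obtains y where "y \<in> carrier (ORing K)" "x = opi [^]\<^bsub>ORing K\<^esub> (2::nat) \<otimes>\<^bsub>ORing K\<^esub> y"
    "y 1 = div_pi2_residue K (x 2)"
proof -
  have "fst (x 1) = 0" using x1 by simp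
  then obtain y where y: "y \<in> carrier (ORing K)" "x = opi \<otimes>\<^bsub>ORing K\<^esub> y"
    using opi_dvd_residue x by blast
  have "pair_mod 1 (x 2) = (0, 0)"
    using x x1 ocarrier_level1[of x] by (simp add: ORing_simps)
  then have "fst (y 1) = 0"
    using div_pi_residue_correct[OF y(1)] y(2) by (simp add: div_pi_residue_def pair_mod_def prod_eq_iff)
  then obtain z where z: "z \<in> carrier (ORing K)" "y = opi \<otimes>\<^bsub>ORing K\<^esub> z"
    using opi_dvd_residue y(1) by blast
  then have "x = opi [^]\<^bsub>ORing K\<^esub> (2::nat) \<otimes>\<^bsub>ORing K\<^esub> z"
    using y opi_carrier by (simp add: numeral_2_eq_2 ORing.m_assoc)
  then show ?thesis
    using that z div_pi2_residue_correct[OF z(1)] y opi_carrier by (simp add: ORing.m_assoc)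
qed

text \<open>pi z = 0 modulo 2^(n+1) forces z = 0 modulo 2^n, since nm K is twice an odd number.\<close>
lemma opi_mult_eq_zero:
  assumes z: "z \<in> carrier (ORing K)" and e: "opi \<otimes>\<^bsub>ORing K\<^esub> z = \<zero>\<^bsub>ORing K\<^esub>"
  shows "z = \<zero>\<^bsub>ORing K\<^esub>"
proof (rule ext)
  fix n
  obtain c d where cd: "z (Suc n) = (c, d)" by fastforce
  have "(opi \<otimes>\<^bsub>ORing K\<^esub> z) (Suc n) = (0, 0)"
    using fun_cong[OF e, of "Suc n"] by (simp add: ORing_simps oconst_apply pair_mod_def)
  then have "pair_mod (Suc n) (pair_mult K (0, 1) (c, d)) = (0, 0)"
    by (simp add: ORing_mult_apply opi_oconst oconst_apply pair_mod_mult_left cd)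
  then have h1: "(2::int) ^ Suc n dvd - nm K * d" and h2: "(2::int) ^ Suc n dvd c + tr K * d"
    by (simp_all add: pair_mod_def pair_mult_def prod_eq_iff mod_eq_0_iff_dvd)
  obtain h where h: "nm K = 2 * h" "odd h" using nm_eq_twice_odd[of K] by blast
  have "(2::int) ^ n dvd h * d" using h1 h(1) by simp
  moreover have "coprime ((2::int) ^ n) h" using h(2) by simp
  ultimately have dd: "(2::int) ^ n dvd d" using coprime_dvd_mult_right_iff by blast
  have "(2::int) ^ n dvd c + tr K * d"
    using h2 by (meson dvd_trans le_imp_power_dvd le_SucI order.refl)
  then have cc: "(2::int) ^ n dvd c" using dd by (simp add: dvd_add_left_iff)
  have "z n = pair_mod n (z (Suc n))"
    using ocarrier_pair_mod_Suc z by (simp add: ORing_simps)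
  then show "z n = \<zero>\<^bsub>ORing K\<^esub> n"
    using cc dd cd by (simp add: ORing_simps oconst_apply pair_mod_def)
qed

lemma opi_pow_mult_cancel:
  assumes "a \<in> carrier (ORing K)" "b \<in> carrier (ORing K)"
    and "opi [^]\<^bsub>ORing K\<^esub> (k::nat) \<otimes>\<^bsub>ORing K\<^esub> a = opi [^]\<^bsub>ORing K\<^esub> k \<otimes>\<^bsub>ORing K\<^esub> b"
  shows "a = b"
  using assms
proof (induction k arbitrary: a b)
  case 0
  then show ?case by simp
next
  case (Suc k)
  note R = Suc.prems(1,2) opi_carrier[of K]
  have "opi \<otimes>\<^bsub>ORing K\<^esub> a = opi \<otimes>\<^bsub>ORing K\<^esub> b"
    by (rule Suc.IH) (use Suc.prems(3) R in \<open>simp_all add: ORing.m_assoc\<close>)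
  then have "opi \<otimes>\<^bsub>ORing K\<^esub> (a \<oplus>\<^bsub>ORing K\<^esub> \<ominus>\<^bsub>ORing K\<^esub> b) = \<zero>\<^bsub>ORing K\<^esub>"
    using R by (simp add: ORing.r_distr ORing.r_minus ORing.r_neg)
  then have "a \<oplus>\<^bsub>ORing K\<^esub> \<ominus>\<^bsub>ORing K\<^esub> b = \<zero>\<^bsub>ORing K\<^esub>"
    using R by (simp add: opi_mult_eq_zero)
  then show ?case
    using R ORing.sum_zero_eq_neg[where K = K and x = a and y = "\<ominus>\<^bsub>ORing K\<^esub> b"] by simp
qed

lemma opi_mult_not_unit:
  assumes "y \<in> carrier (ORing K)"
  shows "opi \<otimes>\<^bsub>ORing K\<^esub> y \<notin> Units (ORing K)"
proof -
  have "fst ((opi \<otimes>\<^bsub>ORing K\<^esub> y) 1) = (- nm K * snd (y 1)) mod 2"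
    by (simp add: ORing_mult_apply opi_oconst oconst_apply pair_mod_mult_left,
        simp add: pair_mod_def pair_mult_def)
  then have "even (fst ((opi \<otimes>\<^bsub>ORing K\<^esub> y) 1))"
    using even_nm[of K] by (simp add: even_mod_2_iff)
  then show ?thesis by (simp add: Units_ORing_iff)
qed

lemma pord_opi_pow_mult_ge:
  assumes "y \<in> carrier (ORing K)"
  shows "enat k \<le> pord K (opi [^]\<^bsub>ORing K\<^esub> k \<otimes>\<^bsub>ORing K\<^esub> y)"
  unfolding pord_def by (rule Sup_upper) (use assms in \<open>auto simp: factor_def\<close>)

lemma pord_opi_pow_mult_unit:
  assumes w: "w \<in> Units (ORing K)"
  shows "pord K (opi [^]\<^bsub>ORing K\<^esub> k \<otimes>\<^bsub>ORing K\<^esub> w) = enat k"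
proof (rule antisym)
  have wc: "w \<in> carrier (ORing K)" using w by blast
  show "enat k \<le> pord K (opi [^]\<^bsub>ORing K\<^esub> k \<otimes>\<^bsub>ORing K\<^esub> w)"
    using pord_opi_pow_mult_ge[OF wc] .
  show "pord K (opi [^]\<^bsub>ORing K\<^esub> k \<otimes>\<^bsub>ORing K\<^esub> w) \<le> enat k"
    unfolding pord_def
  proof (rule Sup_least, clarify)
    fix j :: nat
    assume "opi [^]\<^bsub>ORing K\<^esub> j divides\<^bsub>ORing K\<^esub> opi [^]\<^bsub>ORing K\<^esub> k \<otimes>\<^bsub>ORing K\<^esub> w"
    then obtain c where c: "c \<in> carrier (ORing K)"
      "opi [^]\<^bsub>ORing K\<^esub> k \<otimes>\<^bsub>ORing K\<^esub> w = opi [^]\<^bsub>ORing K\<^esub> j \<otimes>\<^bsub>ORing K\<^esub> c"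
      by (auto simp: factor_def)
    show "enat j \<le> enat k"
    proof (rule ccontr)
      assume "\<not> enat j \<le> enat k"
      then obtain i where "j = k + Suc i" using less_imp_Suc_add by fastforce
      let ?y = "opi [^]\<^bsub>ORing K\<^esub> i \<otimes>\<^bsub>ORing K\<^esub> c"
      have "opi [^]\<^bsub>ORing K\<^esub> j
          = opi [^]\<^bsub>ORing K\<^esub> k \<otimes>\<^bsub>ORing K\<^esub> (opi \<otimes>\<^bsub>ORing K\<^esub> opi [^]\<^bsub>ORing K\<^esub> i)"
        using \<open>j = k + Suc i\<close> by (metis ORing.nat_pow_mult ORing.nat_pow_Suc2 opi_carrier)
      then have "opi [^]\<^bsub>ORing K\<^esub> j \<otimes>\<^bsub>ORing K\<^esub> c = opi [^]\<^bsub>ORing K\<^esub> k \<otimes>\<^bsub>ORing K\<^esub> (opi \<otimes>\<^bsub>ORing K\<^esub> ?y)"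
        using c(1) opi_carrier[of K] by (simp add: ORing.m_assoc)
      then have "w = opi \<otimes>\<^bsub>ORing K\<^esub> ?y"
        using c opi_carrier[of K] wc by (auto intro!: opi_pow_mult_cancel[of _ K _ k])
      then show False
        using w opi_mult_not_unit[of ?y K] c(1) opi_carrier[of K] by auto
    qed
  qed
qed

section \<open>The pi-coefficient\<close>

lemma ORing_a_inv: "x \<in> carrier (ORing K) \<Longrightarrow> \<ominus>\<^bsub>ORing K\<^esub> x = oneg x"
  by (rule ORing.minus_equality) (simp_all add: ORing_simps oadd_oneg oneg_closed)

lemma opi_sq_mult_level1: "(opi [^]\<^bsub>ORing K\<^esub> (2::nat) \<otimes>\<^bsub>ORing K\<^esub> v) 1 = (0, 0)"
proof -
  obtain p q where pq: "nm K = 2 * p" "tr K = 2 * q" using even_nm even_tr by blast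
  obtain a b where v1: "v 1 = (a, b)" by fastforce
  have "opi [^]\<^bsub>ORing K\<^esub> (2::nat) = oconst (- nm K) (tr K)"
    by (simp add: numeral_2_eq_2 ORing_simps omul_one[OF opi_closed] opi_oconst omul_oconst,
        simp add: pair_mult_def)
  then have "(opi [^]\<^bsub>ORing K\<^esub> (2::nat) \<otimes>\<^bsub>ORing K\<^esub> v) 1
      = pair_mod 1 (pair_mult K (- nm K, tr K) (a, b))"
    using v1 by (simp add: ORing_mult_apply oconst_apply pair_mod_mult_left)
  also have "pair_mult K (- nm K, tr K) (a, b)
      = (2 * (- p * a - p * tr K * b), 2 * (- p * b + q * a + q * tr K * b))"
    by (simp add: pair_mult_def pq algebra_simps)
  finally show ?thesis by (simp add: pair_mod_def)
qed

lemma pcoeff_eq: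
  assumes u: "u \<in> carrier (ORing K)" and u1: "fst (u 1) = 1"
  shows "pcoeff K u = nat (snd (u 1))"
proof -
  define s where "s = snd (u 1)"
  have "s mod 2 = s"
    using ocarrier_pair_mod[of u 1] u by (simp add: ORing_simps s_def pair_mod_def prod_eq_iff)
  then have s: "s \<in> {0, 1}" using mod_power2_eq_self_iff[of s 1] by auto
  then have u1s: "u 1 = (1, s)" using u1 s_def by (simp add: prod_eq_iff)
  have head: "\<one>\<^bsub>ORing K\<^esub> \<oplus>\<^bsub>ORing K\<^esub> (if c = 0 then \<zero>\<^bsub>ORing K\<^esub> else opi) = oconst 1 (int c)"
    if "c \<in> {0, 1}" for c :: nat
    using that by (auto simp: ORing_simps opi_oconst oadd_oconst)
  show ?thesis
    unfolding pcoeff_def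
  proof (rule the_equality, intro conjI)
    show "nat (snd (u 1)) \<in> {0, 1}" using s s_def by auto
    define z where "z = u \<ominus>\<^bsub>ORing K\<^esub> oconst 1 s"
    have t: "oconst 1 s \<in> carrier (ORing K)" by (simp add: ORing_simps oconst_closed)
    have z: "z \<in> carrier (ORing K)" unfolding z_def using u t by simp
    have "z 1 = pair_mod 1 (pair_add (u 1) (- 1, - s))"
      unfolding z_def ORing.minus_eq ORing_a_inv[OF t]
      by (simp add: ORing_add_apply oneg_def oconst_apply pair_mod_neg pair_mod_add_right del: One_nat_def)
    then have "z 1 = (0, 0)" using u1s by (simp add: pair_mod_def pair_add_def)
    then obtain v where v: "v \<in> carrier (ORing K)" "z = opi [^]\<^bsub>ORing K\<^esub> (2::nat) \<otimes>\<^bsub>ORing K\<^esub> v"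
      using opi2_dvd_residue z by blast
    have "u = oconst 1 s \<oplus>\<^bsub>ORing K\<^esub> z"
      unfolding z_def using u t by algebra
    then show "\<exists>v\<in>carrier (ORing K). u = \<one>\<^bsub>ORing K\<^esub> \<oplus>\<^bsub>ORing K\<^esub>
        (if nat (snd (u 1)) = 0 then \<zero>\<^bsub>ORing K\<^esub> else opi)
        \<oplus>\<^bsub>ORing K\<^esub> opi [^]\<^bsub>ORing K\<^esub> (2::nat) \<otimes>\<^bsub>ORing K\<^esub> v"
      using v head[of "nat s"] s s_def by auto
  next
    fix c :: nat
    assume "c \<in> {0, 1} \<and> (\<exists>v\<in>carrier (ORing K). u = \<one>\<^bsub>ORing K\<^esub> \<oplus>\<^bsub>ORing K\<^esub>
        (if c = 0 then \<zero>\<^bsub>ORing K\<^esub> else opi) \<oplus>\<^bsub>ORing K\<^esub> opi [^]\<^bsub>ORing K\<^esub> (2::nat) \<otimes>\<^bsub>ORing K\<^esub> v)"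
    then obtain v where c: "c \<in> {0, 1}"
      and "u = \<one>\<^bsub>ORing K\<^esub> \<oplus>\<^bsub>ORing K\<^esub> (if c = 0 then \<zero>\<^bsub>ORing K\<^esub> else opi)
        \<oplus>\<^bsub>ORing K\<^esub> opi [^]\<^bsub>ORing K\<^esub> (2::nat) \<otimes>\<^bsub>ORing K\<^esub> v"
      by blast
    then have "u = oconst 1 (int c) \<oplus>\<^bsub>ORing K\<^esub> opi [^]\<^bsub>ORing K\<^esub> (2::nat) \<otimes>\<^bsub>ORing K\<^esub> v"
      by (simp only: head)
    then have "u 1 = pair_mod 1 (pair_add (pair_mod 1 (1, int c)) (0, 0))"
      using opi_sq_mult_level1[of K v] by (simp add: ORing_add_apply oconst_apply)
    also have "\<dots> = (1, int c)" using c by (auto simp: pair_mod_def pair_add_def)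
    finally show "c = nat (snd (u 1))" by simp
  qed
qed

section \<open>Residues modulo 4\<close>

definition unit_residues :: "(int \<times> int) set" where
  "unit_residues = {1, 3} \<times> {0, 1, 2, 3}"

text \<open>The residues of 1 and 1 + pi: the units b_i can always be chosen among these two.\<close>
definition unit_choices :: "(int \<times> int) set" where
  "unit_choices = {(1, 0), (1, 1)}"

definition sq_sum_mod4 :: "qfield \<Rightarrow> int \<times> int \<Rightarrow> int \<times> int \<Rightarrow> int \<times> int \<Rightarrow> int \<times> int \<Rightarrow> int \<times> int" where
  "sq_sum_mod4 K U1 U2 B1 B2 =
     pair_mod 2 (pair_add (pair_mult K U1 (pair_mult K B1 B1)) (pair_mult K U2 (pair_mult K B2 B2)))"

lemma unit_residues_pow4:
  "\<forall>U\<in>unit_residues. pair_mod 2 (pair_mult K (pair_mult K U U) (pair_mult K U U)) = (1, 0)"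
  by (induct K; code_simp)

lemma residues_pcoeff_differ:
  "\<forall>U1\<in>unit_residues. \<forall>U2\<in>unit_residues. \<forall>e\<in>{0, 1}. snd U1 mod 2 \<noteq> snd U2 mod 2 \<longrightarrow>
     (\<exists>B1\<in>unit_choices. \<exists>B2\<in>unit_choices.
        fst (sq_sum_mod4 K U1 U2 B1 B2) mod 2 = 0 \<and> div_pi_residue (sq_sum_mod4 K U1 U2 B1 B2) = (1, e))"
  by (induct K; code_simp)

lemma residues_pcoeff_equal:
  "\<forall>U1\<in>unit_residues. \<forall>U2\<in>unit_residues. snd U1 mod 2 = snd U2 mod 2 \<longrightarrow>
     (\<forall>f\<in>{0, 1}. \<exists>B1\<in>unit_choices. \<exists>B2\<in>unit_choices.
        pair_mod 1 (sq_sum_mod4 K U1 U2 B1 B2) = (0, 0)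
        \<and> fst (div_pi2_residue K (sq_sum_mod4 K U1 U2 B1 B2)) = f)"
  by (induct K; code_simp)

definition cancels_mod4 :: "qfield \<Rightarrow> int \<times> int \<Rightarrow> int \<times> int \<Rightarrow> bool" where
  "cancels_mod4 K U1 U2 \<longleftrightarrow>
     (\<exists>B1\<in>unit_choices. \<exists>B2\<in>unit_choices. sq_sum_mod4 K U1 U2 B1 B2 = (0, 0))"

definition cancels_to_pi2_unit :: "qfield \<Rightarrow> int \<Rightarrow> int \<times> int \<Rightarrow> int \<times> int \<Rightarrow> bool" where
  "cancels_to_pi2_unit K c U1 U2 \<longleftrightarrow>
     (\<exists>B1\<in>unit_choices. \<exists>B2\<in>unit_choices.
        pair_mod 1 (sq_sum_mod4 K U1 U2 B1 B2) = (0, 0)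
        \<and> div_pi2_residue K (sq_sum_mod4 K U1 U2 B1 B2) = (1, c))"

lemma residues_three_cancel_mod4:
  "K \<in> {Q2_sqrtm1, Q2_sqrtm5} \<Longrightarrow>
   \<forall>U1\<in>unit_residues. \<forall>U2\<in>unit_residues. \<forall>U3\<in>unit_residues.
     snd U1 mod 2 = snd U2 mod 2 \<and> snd U1 mod 2 = snd U3 mod 2 \<longrightarrow>
     cancels_mod4 K U1 U2 \<or> cancels_mod4 K U1 U3 \<or> cancels_mod4 K U2 U3"
  by (induct K; code_simp)

lemma residues_three_cancel_to_pi2_unit:
  "K \<in> {Q2_sqrt2, Q2_sqrt10, Q2_sqrtm2, Q2_sqrtm10} \<Longrightarrow>
   \<forall>U1\<in>unit_residues. \<forall>U2\<in>unit_residues. \<forall>U3\<in>unit_residues. \<forall>c\<in>{0, 1}.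
     snd U1 mod 2 = c \<and> snd U2 mod 2 = c \<and> snd U3 mod 2 = c \<longrightarrow>
     cancels_to_pi2_unit K c U1 U2 \<or> cancels_to_pi2_unit K c U1 U3 \<or> cancels_to_pi2_unit K c U2 U3"
  by (induct K; code_simp)

lemma unit_residue:
  assumes "u \<in> Units (ORing K)"
  shows "u 2 \<in> unit_residues" and "u 1 = (1, snd (u 2) mod 2)"
proof -
  have u: "u \<in> ocarrier" "odd (fst (u 1))" using assms by (simp_all add: Units_ORing_iff)
  obtain c d where cd: "u 2 = (c, d)" "c \<in> {0, 1, 2, 3}" "d \<in> {0, 1, 2, 3}"
    using ocarrier_level2[OF u(1)] .
  have "odd c" using ocarrier_odd_level[OF u, of 2] cd(1) by simp
  then show "u 2 \<in> unit_residues" using cd unfolding unit_residues_def by auto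
  show "u 1 = (1, snd (u 2) mod 2)"
    using ocarrier_level1[OF u(1)] cd(1) \<open>odd c\<close> by (simp add: pair_mod_def odd_iff_mod_2_eq_one)
qed

lemma pcoeff_unit: "u \<in> Units (ORing K) \<Longrightarrow> pcoeff K u = nat (snd (u 2) mod 2)"
  using pcoeff_eq[of u K] unit_residue(2)[of u K] by (simp add: Units_ORing_iff ORing_simps)

lemma pcoeff_unit_eq_iff:
  "u1 \<in> Units (ORing K) \<Longrightarrow> u2 \<in> Units (ORing K) \<Longrightarrow>
   pcoeff K u1 = pcoeff K u2 \<longleftrightarrow> snd (u1 2) mod 2 = snd (u2 2) mod 2"
  by (auto simp: pcoeff_unit nat_eq_iff2)

lemma unit_of_level1: "w \<in> carrier (ORing K) \<Longrightarrow> fst (w 1) = 1 \<Longrightarrow> w \<in> Units (ORing K)"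
  by (simp add: Units_ORing_iff ORing_simps)

lemma ORing_pow_level2_one: "y 2 = (1, 0) \<Longrightarrow> (y [^]\<^bsub>ORing K\<^esub> (k::nat)) 2 = (1, 0)"
  by (induction k) (simp_all add: ORing_simps oconst_apply omul_apply pair_mod_def pair_mult_def)

text \<open>Units of O/4 have exponent dividing 4, so b^(2m) is congruent to b^2 modulo 4 for odd m.\<close>
lemma unit_pow_level2:
  fixes m :: nat
  assumes b: "b \<in> Units (ORing K)" and m: "odd m"
  shows "(b [^]\<^bsub>ORing K\<^esub> (2 * m)) 2 = pair_mod 2 (pair_mult K (b 2) (b 2))"
proof -
  have bc: "b \<in> carrier (ORing K)" using b by blast
  obtain k where "m = 2 * k + 1" using m oddE by blast
  then have "2 * m = 2 + 4 * k" by simp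
  then have pow: "b [^]\<^bsub>ORing K\<^esub> (2 * m)
      = b [^]\<^bsub>ORing K\<^esub> (2::nat) \<otimes>\<^bsub>ORing K\<^esub> (b [^]\<^bsub>ORing K\<^esub> (4::nat)) [^]\<^bsub>ORing K\<^esub> k"
    using bc by (metis ORing.nat_pow_mult ORing.nat_pow_pow)
  have sq: "(b [^]\<^bsub>ORing K\<^esub> (2::nat)) 2 = pair_mod 2 (pair_mult K (b 2) (b 2))"
    using bc by (simp add: numeral_2_eq_2 ORing_mult_apply)
  have "b [^]\<^bsub>ORing K\<^esub> (4::nat) = b [^]\<^bsub>ORing K\<^esub> (2::nat) \<otimes>\<^bsub>ORing K\<^esub> b [^]\<^bsub>ORing K\<^esub> (2::nat)"
    using ORing.nat_pow_mult[OF bc, of 2 2] by simp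
  then have "(b [^]\<^bsub>ORing K\<^esub> (4::nat)) 2
      = pair_mod 2 (pair_mult K (pair_mult K (b 2) (b 2)) (pair_mult K (b 2) (b 2)))"
    by (simp add: ORing_mult_apply sq pair_mod_simps)
  also have "\<dots> = (1, 0)" using unit_residues_pow4 unit_residue(1)[OF b] by blast
  finally have "((b [^]\<^bsub>ORing K\<^esub> (4::nat)) [^]\<^bsub>ORing K\<^esub> k) 2 = (1, 0)"
    by (rule ORing_pow_level2_one)
  then show ?thesis
    unfolding pow by (simp add: ORing_mult_apply sq pair_mod_mult_left, simp add: pair_mult_def)
qed

section \<open>Values of the diagonal form\<close>

lemma unit_choice_lift:
  assumes "B \<in> unit_choices"
  shows "oconst (fst B) (snd B) \<in> Units (ORing K)" and "oconst (fst B) (snd B) 2 = B"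
  using assms unfolding unit_choices_def
  by (auto simp: Units_ORing_iff oconst_closed oconst_apply pair_mod_def)

abbreviation diag_form :: "qfield \<Rightarrow> nat \<Rightarrow> oelt \<Rightarrow> oelt \<Rightarrow> oelt \<Rightarrow> oelt \<Rightarrow> oelt" where
  "diag_form K d a1 a2 b1 b2 \<equiv> a1 \<otimes>\<^bsub>ORing K\<^esub> b1 [^]\<^bsub>ORing K\<^esub> d \<oplus>\<^bsub>ORing K\<^esub> a2 \<otimes>\<^bsub>ORing K\<^esub> b2 [^]\<^bsub>ORing K\<^esub> d"

lemma diag_form_level2:
  fixes m :: nat
  assumes "odd m" "u1 \<in> Units (ORing K)" "u2 \<in> Units (ORing K)" "b1 \<in> Units (ORing K)" "b2 \<in> Units (ORing K)"
  shows "diag_form K (2 * m) u1 u2 b1 b2 2 = sq_sum_mod4 K (u1 2) (u2 2) (b1 2) (b2 2)"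
  using assms by (simp add: ORing_add_apply ORing_mult_apply unit_pow_level2 sq_sum_mod4_def pair_mod_simps)

lemma diag_form_of_residue:
  fixes m r :: nat
  assumes m: "odd m" and u: "u1 \<in> Units (ORing K)" "u2 \<in> Units (ORing K)"
    and P: "\<exists>B1\<in>unit_choices. \<exists>B2\<in>unit_choices. P (sq_sum_mod4 K (u1 2) (u2 2) B1 B2)"
  obtains b1 b2 s where "b1 \<in> Units (ORing K)" "b2 \<in> Units (ORing K)" "s \<in> carrier (ORing K)" "P (s 2)"
    "diag_form K (2 * m) (opi [^]\<^bsub>ORing K\<^esub> r \<otimes>\<^bsub>ORing K\<^esub> u1) (opi [^]\<^bsub>ORing K\<^esub> r \<otimes>\<^bsub>ORing K\<^esub> u2) b1 b2 = opi [^]\<^bsub>ORing K\<^esub> r \<otimes>\<^bsub>ORing K\<^esub> s"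
proof -
  obtain B1 B2 where B: "B1 \<in> unit_choices" "B2 \<in> unit_choices"
    and PB: "P (sq_sum_mod4 K (u1 2) (u2 2) B1 B2)"
    using P by blast
  define b1 where "b1 = oconst (fst B1) (snd B1)"
  define b2 where "b2 = oconst (fst B2) (snd B2)"
  have b: "b1 \<in> Units (ORing K)" "b2 \<in> Units (ORing K)" "b1 2 = B1" "b2 2 = B2"
    using unit_choice_lift B unfolding b1_def b2_def by auto
  define s where "s = diag_form K (2 * m) u1 u2 b1 b2"
  have R: "u1 \<in> carrier (ORing K)" "u2 \<in> carrier (ORing K)"
    "b1 [^]\<^bsub>ORing K\<^esub> (2 * m) \<in> carrier (ORing K)" "b2 [^]\<^bsub>ORing K\<^esub> (2 * m) \<in> carrier (ORing K)"
    "opi [^]\<^bsub>ORing K\<^esub> r \<in> carrier (ORing K)"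
    using u b opi_carrier by auto
  have "s \<in> carrier (ORing K)" unfolding s_def using R by simp
  moreover have "P (s 2)"
    unfolding s_def diag_form_level2[OF m u b(1,2)] b(3,4) using PB .
  moreover have "diag_form K (2 * m) (opi [^]\<^bsub>ORing K\<^esub> r \<otimes>\<^bsub>ORing K\<^esub> u1) (opi [^]\<^bsub>ORing K\<^esub> r \<otimes>\<^bsub>ORing K\<^esub> u2) b1 b2 = opi [^]\<^bsub>ORing K\<^esub> r \<otimes>\<^bsub>ORing K\<^esub> s"
    unfolding s_def using R by (simp add: ORing.m_assoc ORing.r_distr)
  ultimately show ?thesis using that b(1,2) by blast
qed

lemma opi_pow_mult_pow:
  "w \<in> carrier (ORing K) \<Longrightarrow>
   opi [^]\<^bsub>ORing K\<^esub> (r::nat) \<otimes>\<^bsub>ORing K\<^esub> (opi [^]\<^bsub>ORing K\<^esub> (k::nat) \<otimes>\<^bsub>ORing K\<^esub> w) = opi [^]\<^bsub>ORing K\<^esub> (r + k) \<otimes>\<^bsub>ORing K\<^esub> w"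
  by (simp add: ORing.m_assoc[symmetric] ORing.nat_pow_mult opi_carrier)

lemma carrier_level1: "s \<in> carrier (ORing K) \<Longrightarrow> s 1 = pair_mod 1 (s 2)"
  by (metis ORing_simps(1) ocarrier_level1)

lemma diag_form_pcoeff_differ:
  fixes m r e :: nat
  assumes m: "odd m" and u: "u1 \<in> Units (ORing K)" "u2 \<in> Units (ORing K)"
    and differ: "pcoeff K u1 \<noteq> pcoeff K u2" and e: "e \<in> {0, 1}"
  shows "\<exists>b1\<in>Units (ORing K). \<exists>b2\<in>Units (ORing K). \<exists>w\<in>Units (ORing K). pcoeff K w = e \<and>
    diag_form K (2 * m) (opi [^]\<^bsub>ORing K\<^esub> r \<otimes>\<^bsub>ORing K\<^esub> u1) (opi [^]\<^bsub>ORing K\<^esub> r \<otimes>\<^bsub>ORing K\<^esub> u2) b1 b2 = opi [^]\<^bsub>ORing K\<^esub> (r + 1) \<otimes>\<^bsub>ORing K\<^esub> w"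
proof -
  have "int e \<in> {0, 1}" using e by auto
  then have "\<exists>B1\<in>unit_choices. \<exists>B2\<in>unit_choices.
      fst (sq_sum_mod4 K (u1 2) (u2 2) B1 B2) mod 2 = 0
      \<and> div_pi_residue (sq_sum_mod4 K (u1 2) (u2 2) B1 B2) = (1, int e)"
    using residues_pcoeff_differ unit_residue(1)[OF u(1)] unit_residue(1)[OF u(2)]
      differ pcoeff_unit_eq_iff[OF u] by blast
  then obtain b1 b2 s where b: "b1 \<in> Units (ORing K)" "b2 \<in> Units (ORing K)"
    and s: "s \<in> carrier (ORing K)" "fst (s 2) mod 2 = 0 \<and> div_pi_residue (s 2) = (1, int e)"
    and sum: "diag_form K (2 * m) (opi [^]\<^bsub>ORing K\<^esub> r \<otimes>\<^bsub>ORing K\<^esub> u1) (opi [^]\<^bsub>ORing K\<^esub> r \<otimes>\<^bsub>ORing K\<^esub> u2) b1 b2 = opi [^]\<^bsub>ORing K\<^esub> r \<otimes>\<^bsub>ORing K\<^esub> s"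
    by (rule diag_form_of_residue[OF m u])
  have "fst (s 1) = 0" using carrier_level1[OF s(1)] s(2) by (simp add: pair_mod_def)
  then obtain w where w: "w \<in> carrier (ORing K)" "s = opi \<otimes>\<^bsub>ORing K\<^esub> w" "w 1 = (1, int e)"
    using opi_dvd_residue[OF s(1)] s(2) by metis
  have "w \<in> Units (ORing K)" "pcoeff K w = e" using unit_of_level1 pcoeff_eq w by simp_all
  moreover have "opi [^]\<^bsub>ORing K\<^esub> r \<otimes>\<^bsub>ORing K\<^esub> s = opi [^]\<^bsub>ORing K\<^esub> (r + 1) \<otimes>\<^bsub>ORing K\<^esub> w"
    using opi_pow_mult_pow[OF w(1), of r 1] w(2) opi_carrier by simp
  ultimately show ?thesis using b sum by metis
qed

lemma diag_form_pcoeff_equal: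
  fixes m r :: nat and f :: int
  assumes m: "odd m" and u: "u1 \<in> Units (ORing K)" "u2 \<in> Units (ORing K)"
    and equal: "pcoeff K u1 = pcoeff K u2" and f: "f \<in> {0, 1}"
  obtains b1 b2 w where "b1 \<in> Units (ORing K)" "b2 \<in> Units (ORing K)"
    "w \<in> carrier (ORing K)" "fst (w 1) = f"
    "diag_form K (2 * m) (opi [^]\<^bsub>ORing K\<^esub> r \<otimes>\<^bsub>ORing K\<^esub> u1) (opi [^]\<^bsub>ORing K\<^esub> r \<otimes>\<^bsub>ORing K\<^esub> u2) b1 b2 = opi [^]\<^bsub>ORing K\<^esub> (r + 2) \<otimes>\<^bsub>ORing K\<^esub> w"
proof -
  have "\<exists>B1\<in>unit_choices. \<exists>B2\<in>unit_choices.
      pair_mod 1 (sq_sum_mod4 K (u1 2) (u2 2) B1 B2) = (0, 0)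
      \<and> fst (div_pi2_residue K (sq_sum_mod4 K (u1 2) (u2 2) B1 B2)) = f"
    using residues_pcoeff_equal unit_residue(1)[OF u(1)] unit_residue(1)[OF u(2)]
      equal pcoeff_unit_eq_iff[OF u] f by blast
  then obtain b1 b2 s where b: "b1 \<in> Units (ORing K)" "b2 \<in> Units (ORing K)"
    and s: "s \<in> carrier (ORing K)" "pair_mod 1 (s 2) = (0, 0) \<and> fst (div_pi2_residue K (s 2)) = f"
    and sum: "diag_form K (2 * m) (opi [^]\<^bsub>ORing K\<^esub> r \<otimes>\<^bsub>ORing K\<^esub> u1) (opi [^]\<^bsub>ORing K\<^esub> r \<otimes>\<^bsub>ORing K\<^esub> u2) b1 b2 = opi [^]\<^bsub>ORing K\<^esub> r \<otimes>\<^bsub>ORing K\<^esub> s"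
    by (rule diag_form_of_residue[OF m u])
  have "s 1 = (0, 0)" using carrier_level1[OF s(1)] s(2) by simp
  then obtain w where w: "w \<in> carrier (ORing K)" "s = opi [^]\<^bsub>ORing K\<^esub> (2::nat) \<otimes>\<^bsub>ORing K\<^esub> w"
    "w 1 = div_pi2_residue K (s 2)"
    using opi2_dvd_residue[OF s(1)] by blast
  show ?thesis
    using that[OF b w(1)] w s(2) sum opi_pow_mult_pow[OF w(1)] by simp
qed

lemma diag_form_pcoeff_equal_pord_eq:
  fixes m r :: nat
  assumes "odd m" "u1 \<in> Units (ORing K)" "u2 \<in> Units (ORing K)" "pcoeff K u1 = pcoeff K u2"
  shows "\<exists>b1\<in>Units (ORing K). \<exists>b2\<in>Units (ORing K).
    pord K (diag_form K (2 * m) (opi [^]\<^bsub>ORing K\<^esub> r \<otimes>\<^bsub>ORing K\<^esub> u1) (opi [^]\<^bsub>ORing K\<^esub> r \<otimes>\<^bsub>ORing K\<^esub> u2) b1 b2) = enat (r + 2)"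
proof -
  obtain b1 b2 w where b: "b1 \<in> Units (ORing K)" "b2 \<in> Units (ORing K)"
    and w: "w \<in> carrier (ORing K)" "fst (w 1) = 1"
    and sum: "diag_form K (2 * m) (opi [^]\<^bsub>ORing K\<^esub> r \<otimes>\<^bsub>ORing K\<^esub> u1) (opi [^]\<^bsub>ORing K\<^esub> r \<otimes>\<^bsub>ORing K\<^esub> u2) b1 b2
      = opi [^]\<^bsub>ORing K\<^esub> (r + 2) \<otimes>\<^bsub>ORing K\<^esub> w"
    by (rule diag_form_pcoeff_equal[OF assms, where f = 1]) auto
  then show ?thesis using pord_opi_pow_mult_unit[OF unit_of_level1[OF w]] by metis
qed

lemma diag_form_pcoeff_equal_pord_ge:
  fixes m r :: nat
  assumes "odd m" "u1 \<in> Units (ORing K)" "u2 \<in> Units (ORing K)" "pcoeff K u1 = pcoeff K u2"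
  shows "\<exists>b1\<in>Units (ORing K). \<exists>b2\<in>Units (ORing K).
    pord K (diag_form K (2 * m) (opi [^]\<^bsub>ORing K\<^esub> r \<otimes>\<^bsub>ORing K\<^esub> u1) (opi [^]\<^bsub>ORing K\<^esub> r \<otimes>\<^bsub>ORing K\<^esub> u2) b1 b2) \<ge> enat (r + 3)"
proof -
  obtain b1 b2 w where b: "b1 \<in> Units (ORing K)" "b2 \<in> Units (ORing K)"
    and w: "w \<in> carrier (ORing K)" "fst (w 1) = 0"
    and sum: "diag_form K (2 * m) (opi [^]\<^bsub>ORing K\<^esub> r \<otimes>\<^bsub>ORing K\<^esub> u1) (opi [^]\<^bsub>ORing K\<^esub> r \<otimes>\<^bsub>ORing K\<^esub> u2) b1 b2
      = opi [^]\<^bsub>ORing K\<^esub> (r + 2) \<otimes>\<^bsub>ORing K\<^esub> w"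
    by (rule diag_form_pcoeff_equal[OF assms, where f = 0]) auto
  obtain z where z: "z \<in> carrier (ORing K)" "w = opi \<otimes>\<^bsub>ORing K\<^esub> z"
    using opi_dvd_residue[OF w] by blast
  have "diag_form K (2 * m) (opi [^]\<^bsub>ORing K\<^esub> r \<otimes>\<^bsub>ORing K\<^esub> u1) (opi [^]\<^bsub>ORing K\<^esub> r \<otimes>\<^bsub>ORing K\<^esub> u2) b1 b2 = opi [^]\<^bsub>ORing K\<^esub> (r + 3) \<otimes>\<^bsub>ORing K\<^esub> z"
    using sum z opi_carrier by (simp add: ORing.m_assoc eval_nat_numeral)
  then show ?thesis using pord_opi_pow_mult_ge[OF z(1)] b by metis
qed

lemma diag_form_pord_ge_of_cancels_mod4:
  fixes m r :: nat
  assumes m: "odd m" and u: "u1 \<in> Units (ORing K)" "u2 \<in> Units (ORing K)"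
    and cancels: "cancels_mod4 K (u1 2) (u2 2)"
  shows "\<exists>b1\<in>Units (ORing K). \<exists>b2\<in>Units (ORing K).
    pord K (diag_form K (2 * m) (opi [^]\<^bsub>ORing K\<^esub> r \<otimes>\<^bsub>ORing K\<^esub> u1) (opi [^]\<^bsub>ORing K\<^esub> r \<otimes>\<^bsub>ORing K\<^esub> u2) b1 b2) \<ge> enat (r + 4)"
proof -
  obtain b1 b2 s where b: "b1 \<in> Units (ORing K)" "b2 \<in> Units (ORing K)"
    and s: "s \<in> carrier (ORing K)" "s 2 = (0, 0)"
    and sum: "diag_form K (2 * m) (opi [^]\<^bsub>ORing K\<^esub> r \<otimes>\<^bsub>ORing K\<^esub> u1) (opi [^]\<^bsub>ORing K\<^esub> r \<otimes>\<^bsub>ORing K\<^esub> u2) b1 b2 = opi [^]\<^bsub>ORing K\<^esub> r \<otimes>\<^bsub>ORing K\<^esub> s"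
    by (rule diag_form_of_residue[OF m u cancels[unfolded cancels_mod4_def]])
  have "s 1 = (0, 0)" using carrier_level1[OF s(1)] s(2) by (simp add: pair_mod_def)
  then obtain w where w: "w \<in> carrier (ORing K)" "s = opi [^]\<^bsub>ORing K\<^esub> (2::nat) \<otimes>\<^bsub>ORing K\<^esub> w"
    "w 1 = div_pi2_residue K (s 2)"
    using opi2_dvd_residue[OF s(1)] by blast
  then have "w 1 = (0, 0)" using s(2) by (simp add: div_pi2_residue_def)
  then obtain z where z: "z \<in> carrier (ORing K)" "w = opi [^]\<^bsub>ORing K\<^esub> (2::nat) \<otimes>\<^bsub>ORing K\<^esub> z"
    using opi2_dvd_residue w(1) by blast
  have "diag_form K (2 * m) (opi [^]\<^bsub>ORing K\<^esub> r \<otimes>\<^bsub>ORing K\<^esub> u1) (opi [^]\<^bsub>ORing K\<^esub> r \<otimes>\<^bsub>ORing K\<^esub> u2) b1 b2 = opi [^]\<^bsub>ORing K\<^esub> (r + 4) \<otimes>\<^bsub>ORing K\<^esub> z"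
    using sum w(2) z opi_carrier by (simp add: ORing.m_assoc eval_nat_numeral)
  then show ?thesis using pord_opi_pow_mult_ge[OF z(1)] b by metis
qed

lemma diag_form_pi2_unit_of_cancels:
  fixes m r c :: nat
  assumes m: "odd m" and u: "u1 \<in> Units (ORing K)" "u2 \<in> Units (ORing K)"
    and cancels: "cancels_to_pi2_unit K (int c) (u1 2) (u2 2)"
  shows "\<exists>b1\<in>Units (ORing K). \<exists>b2\<in>Units (ORing K). \<exists>w\<in>Units (ORing K). pcoeff K w = c \<and>
    diag_form K (2 * m) (opi [^]\<^bsub>ORing K\<^esub> r \<otimes>\<^bsub>ORing K\<^esub> u1) (opi [^]\<^bsub>ORing K\<^esub> r \<otimes>\<^bsub>ORing K\<^esub> u2) b1 b2 = opi [^]\<^bsub>ORing K\<^esub> (r + 2) \<otimes>\<^bsub>ORing K\<^esub> w"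
proof -
  obtain b1 b2 s where b: "b1 \<in> Units (ORing K)" "b2 \<in> Units (ORing K)"
    and s: "s \<in> carrier (ORing K)" "pair_mod 1 (s 2) = (0, 0) \<and> div_pi2_residue K (s 2) = (1, int c)"
    and sum: "diag_form K (2 * m) (opi [^]\<^bsub>ORing K\<^esub> r \<otimes>\<^bsub>ORing K\<^esub> u1) (opi [^]\<^bsub>ORing K\<^esub> r \<otimes>\<^bsub>ORing K\<^esub> u2) b1 b2 = opi [^]\<^bsub>ORing K\<^esub> r \<otimes>\<^bsub>ORing K\<^esub> s"
    by (rule diag_form_of_residue[OF m u cancels[unfolded cancels_to_pi2_unit_def]])
  have "s 1 = (0, 0)" using carrier_level1[OF s(1)] s(2) by simp
  then obtain w where w: "w \<in> carrier (ORing K)" "s = opi [^]\<^bsub>ORing K\<^esub> (2::nat) \<otimes>\<^bsub>ORing K\<^esub> w" "w 1 = (1, int c)"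
    using opi2_dvd_residue[OF s(1)] s(2) by metis
  have "w \<in> Units (ORing K)" "pcoeff K w = c" using unit_of_level1 pcoeff_eq w by simp_all
  moreover have "diag_form K (2 * m) (opi [^]\<^bsub>ORing K\<^esub> r \<otimes>\<^bsub>ORing K\<^esub> u1) (opi [^]\<^bsub>ORing K\<^esub> r \<otimes>\<^bsub>ORing K\<^esub> u2) b1 b2
      = opi [^]\<^bsub>ORing K\<^esub> (r + 2) \<otimes>\<^bsub>ORing K\<^esub> w"
    using sum w(2) opi_pow_mult_pow[OF w(1)] by simp
  ultimately show ?thesis using b by metis
qed

lemma pair_among_three:
  "P 1 2 \<or> P 1 3 \<or> P 2 3 \<Longrightarrow> \<exists>i\<in>{1, 2, 3::nat}. \<exists>j\<in>{1, 2, 3::nat}. i \<noteq> j \<and> P i j"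
  by auto

lemma three_units_diag_form_pord_ge:
  fixes m r :: nat and a u :: "nat \<Rightarrow> oelt"
  assumes K: "K \<in> {Q2_sqrtm1, Q2_sqrtm5}" and m: "odd m"
    and au: "\<forall>i\<in>{1,2,3}. u i \<in> Units (ORing K)
      \<and> a i = opi [^]\<^bsub>ORing K\<^esub> r \<otimes>\<^bsub>ORing K\<^esub> u i \<and> pcoeff K (u i) = pcoeff K (u 1)"
  shows "\<exists>i\<in>{1,2,3}. \<exists>j\<in>{1,2,3::nat}. i \<noteq> j \<and> (\<exists>bi\<in>Units (ORing K). \<exists>bj\<in>Units (ORing K).
    pord K (diag_form K (2 * m) (a i) (a j) bi bj) \<ge> enat (r + 4))"
proof -
  have u: "u i \<in> Units (ORing K)" "a i = opi [^]\<^bsub>ORing K\<^esub> r \<otimes>\<^bsub>ORing K\<^esub> u i"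
    "snd (u i 2) mod 2 = snd (u 1 2) mod 2" "u i 2 \<in> unit_residues"
    if "i \<in> {1, 2, 3}" for i
    using au that pcoeff_unit_eq_iff unit_residue(1) by blast+
  have pair: "\<exists>bi\<in>Units (ORing K). \<exists>bj\<in>Units (ORing K).
      pord K (diag_form K (2 * m) (a i) (a j) bi bj) \<ge> enat (r + 4)"
    if "i \<in> {1, 2, 3}" "j \<in> {1, 2, 3}" "cancels_mod4 K (u i 2) (u j 2)" for i j
    using diag_form_pord_ge_of_cancels_mod4[OF m u(1)[OF that(1)] u(1)[OF that(2)] that(3), where r = r]
    by (simp only: u(2)[OF that(1)] u(2)[OF that(2)])
  have "u 1 2 \<in> unit_residues" "u 2 2 \<in> unit_residues" "u 3 2 \<in> unit_residues"
    "snd (u 1 2) mod 2 = snd (u 2 2) mod 2 \<and> snd (u 1 2) mod 2 = snd (u 3 2) mod 2"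
    using u(3)[of 2] u(3)[of 3] u(4)[of 1] u(4)[of 2] u(4)[of 3] by simp_all
  then have "cancels_mod4 K (u 1 2) (u 2 2) \<or> cancels_mod4 K (u 1 2) (u 3 2) \<or> cancels_mod4 K (u 2 2) (u 3 2)"
    using residues_three_cancel_mod4[OF K] by blast
  then show ?thesis
    by (intro pair_among_three) (use pair in blast)
qed

lemma three_units_diag_form_pi2_unit:
  fixes m r c :: nat and a u :: "nat \<Rightarrow> oelt"
  assumes K: "K \<in> {Q2_sqrt2, Q2_sqrt10, Q2_sqrtm2, Q2_sqrtm10}" and m: "odd m"
    and au: "\<forall>i\<in>{1,2,3}. u i \<in> Units (ORing K)
      \<and> a i = opi [^]\<^bsub>ORing K\<^esub> r \<otimes>\<^bsub>ORing K\<^esub> u i \<and> pcoeff K (u i) = c"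
  shows "\<exists>i\<in>{1,2,3}. \<exists>j\<in>{1,2,3::nat}. i \<noteq> j \<and> (\<exists>bi\<in>Units (ORing K). \<exists>bj\<in>Units (ORing K).
    \<exists>w\<in>Units (ORing K). pcoeff K w = c \<and> diag_form K (2 * m) (a i) (a j) bi bj = opi [^]\<^bsub>ORing K\<^esub> (r + 2) \<otimes>\<^bsub>ORing K\<^esub> w)"
proof -
  have u: "u i \<in> Units (ORing K)" "a i = opi [^]\<^bsub>ORing K\<^esub> r \<otimes>\<^bsub>ORing K\<^esub> u i"
    "pcoeff K (u i) = c" "u i 2 \<in> unit_residues"
    if "i \<in> {1, 2, 3}" for i
    using au that unit_residue(1) by blast+
  have parity: "snd (u i 2) mod 2 = int c" if "i \<in> {1, 2, 3}" for i
    using pcoeff_unit[OF u(1)[OF that]] u(3)[OF that] by simp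
  have pair: "\<exists>bi\<in>Units (ORing K). \<exists>bj\<in>Units (ORing K). \<exists>w\<in>Units (ORing K). pcoeff K w = c \<and>
      diag_form K (2 * m) (a i) (a j) bi bj = opi [^]\<^bsub>ORing K\<^esub> (r + 2) \<otimes>\<^bsub>ORing K\<^esub> w"
    if "i \<in> {1, 2, 3}" "j \<in> {1, 2, 3}" "cancels_to_pi2_unit K (int c) (u i 2) (u j 2)" for i j
    using diag_form_pi2_unit_of_cancels[OF m u(1)[OF that(1)] u(1)[OF that(2)] that(3), where r = r]
    by (simp only: u(2)[OF that(1)] u(2)[OF that(2)])
  have "u 1 2 \<in> unit_residues" "u 2 2 \<in> unit_residues" "u 3 2 \<in> unit_residues"
    "snd (u 1 2) mod 2 = int c \<and> snd (u 2 2) mod 2 = int c \<and> snd (u 3 2) mod 2 = int c"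
    "int c \<in> {0, 1}"
    using u(4)[of 1] u(4)[of 2] u(4)[of 3] parity[of 1] parity[of 2] parity[of 3] by auto
  then have "cancels_to_pi2_unit K (int c) (u 1 2) (u 2 2) \<or> cancels_to_pi2_unit K (int c) (u 1 2) (u 3 2)
      \<or> cancels_to_pi2_unit K (int c) (u 2 2) (u 3 2)"
    using residues_three_cancel_to_pi2_unit[OF K] by blast
  then show ?thesis
    by (intro pair_among_three) (use pair in blast)
qed

theorem lemma2:
  fixes K :: qfield and m r :: nat
  assumes "odd m" and "m \<ge> 3"
  defines "R \<equiv> ORing K" and "d \<equiv> 2 * m"
  shows
   "(\<forall>a1 a2 u1 u2. u1 \<in> Units R \<and> u2 \<in> Units R
       \<and> a1 = opi [^]\<^bsub>R\<^esub> r \<otimes>\<^bsub>R\<^esub> u1 \<and> a2 = opi [^]\<^bsub>R\<^esub> r \<otimes>\<^bsub>R\<^esub> u2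
       \<and> pcoeff K u1 \<noteq> pcoeff K u2 \<longrightarrow>
       (\<forall>e\<in>{0,1}. \<exists>b1\<in>Units R. \<exists>b2\<in>Units R. \<exists>w\<in>Units R. pcoeff K w = e \<and>
          a1 \<otimes>\<^bsub>R\<^esub> b1 [^]\<^bsub>R\<^esub> d \<oplus>\<^bsub>R\<^esub> a2 \<otimes>\<^bsub>R\<^esub> b2 [^]\<^bsub>R\<^esub> d
            = opi [^]\<^bsub>R\<^esub> (r + 1) \<otimes>\<^bsub>R\<^esub> w))
  \<and> (\<forall>a1 a2 u1 u2. u1 \<in> Units R \<and> u2 \<in> Units R
       \<and> a1 = opi [^]\<^bsub>R\<^esub> r \<otimes>\<^bsub>R\<^esub> u1 \<and> a2 = opi [^]\<^bsub>R\<^esub> r \<otimes>\<^bsub>R\<^esub> u2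
       \<and> pcoeff K u1 = pcoeff K u2 \<longrightarrow>
       (\<exists>b1\<in>Units R. \<exists>b2\<in>Units R.
          pord K (a1 \<otimes>\<^bsub>R\<^esub> b1 [^]\<^bsub>R\<^esub> d \<oplus>\<^bsub>R\<^esub> a2 \<otimes>\<^bsub>R\<^esub> b2 [^]\<^bsub>R\<^esub> d)
            = enat (r + 2)))
  \<and> (\<forall>a1 a2 u1 u2. u1 \<in> Units R \<and> u2 \<in> Units R
       \<and> a1 = opi [^]\<^bsub>R\<^esub> r \<otimes>\<^bsub>R\<^esub> u1 \<and> a2 = opi [^]\<^bsub>R\<^esub> r \<otimes>\<^bsub>R\<^esub> u2
       \<and> pcoeff K u1 = pcoeff K u2 \<longrightarrow>
       (\<exists>b1\<in>Units R. \<exists>b2\<in>Units R.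
          pord K (a1 \<otimes>\<^bsub>R\<^esub> b1 [^]\<^bsub>R\<^esub> d \<oplus>\<^bsub>R\<^esub> a2 \<otimes>\<^bsub>R\<^esub> b2 [^]\<^bsub>R\<^esub> d)
            \<ge> enat (r + 3)))
  \<and> (K \<in> {Q2_sqrtm1, Q2_sqrtm5} \<longrightarrow>
       (\<forall>a u :: nat \<Rightarrow> oelt. (\<forall>i\<in>{1,2,3}. u i \<in> Units R
            \<and> a i = opi [^]\<^bsub>R\<^esub> r \<otimes>\<^bsub>R\<^esub> u i \<and> pcoeff K (u i) = pcoeff K (u 1)) \<longrightarrow>
         (\<exists>i\<in>{1,2,3}. \<exists>j\<in>{1,2,3::nat}. i \<noteq> j \<and> (\<exists>bi\<in>Units R. \<exists>bj\<in>Units R.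
            pord K (a i \<otimes>\<^bsub>R\<^esub> bi [^]\<^bsub>R\<^esub> d \<oplus>\<^bsub>R\<^esub> a j \<otimes>\<^bsub>R\<^esub> bj [^]\<^bsub>R\<^esub> d)
              \<ge> enat (r + 4)))))
  \<and> (K \<in> {Q2_sqrt2, Q2_sqrt10, Q2_sqrtm2, Q2_sqrtm10} \<longrightarrow>
       (\<forall>(a :: nat \<Rightarrow> oelt) u c. (\<forall>i\<in>{1,2,3}. u i \<in> Units R
            \<and> a i = opi [^]\<^bsub>R\<^esub> r \<otimes>\<^bsub>R\<^esub> u i \<and> pcoeff K (u i) = c) \<longrightarrow>
         (\<exists>i\<in>{1,2,3}. \<exists>j\<in>{1,2,3::nat}. i \<noteq> j \<and> (\<exists>bi\<in>Units R. \<exists>bj\<in>Units R.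
            \<exists>w\<in>Units R. pcoeff K w = c \<and>
            a i \<otimes>\<^bsub>R\<^esub> bi [^]\<^bsub>R\<^esub> d \<oplus>\<^bsub>R\<^esub> a j \<otimes>\<^bsub>R\<^esub> bj [^]\<^bsub>R\<^esub> d
              = opi [^]\<^bsub>R\<^esub> (r + 2) \<otimes>\<^bsub>R\<^esub> w))))"
  unfolding R_def d_def
  apply (intro conjI impI allI ballI)
  subgoal by (elim conjE, hypsubst) (rule diag_form_pcoeff_differ[OF \<open>odd m\<close>])
  subgoal by (elim conjE, hypsubst) (rule diag_form_pcoeff_equal_pord_eq[OF \<open>odd m\<close>])
  subgoal by (elim conjE, hypsubst) (rule diag_form_pcoeff_equal_pord_ge[OF \<open>odd m\<close>])
  subgoal by (rule three_units_diag_form_pord_ge[OF _ \<open>odd m\<close>])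
  subgoal by (rule three_units_diag_form_pi2_unit[OF _ \<open>odd m\<close>])
  done

end
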